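(* Let $X$, $H$, $H_0$ be arbitrary Hermitian $N\times N$ matrices. For every $t\in\mathbb{R}$, $$e^{-iH_0t}e^{iHt}Xe^{-iHt}e^{iH_0t}-e^{i(H-H_0)t}Xe^{-i(H-H_0)t}=\sum_{\ell\ge2}\frac{(it)^\ell}{\ell!}C_\ell,$$ where each $C_\ell$ is a sum of at most $2^\ell\ell^2$ nested commutators of order $\ell-1$ of the form $[Z_1,[Z_2,[\cdots[Z_{\ell-1},X]\cdots]]]$ in which exactly one $Z_j$ equals $[H,-H_0]$ and every other $Z_j$ is either $H$ or $-H_0$.
   Context: $[A,B]=AB-BA$. *)

theory Defs
  imports "HOL-Analysis.Analysis"
begin

type_synonym 'n cmat = "complex ^ 'n ^ 'n"

definition hermitian :: "'n::finite cmat \<Rightarrow> bool" where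
  "hermitian A \<longleftrightarrow> (\<forall>i j. A $ i $ j = cnj (A $ j $ i))"

definition cscale :: "complex \<Rightarrow> 'n::finite cmat \<Rightarrow> 'n cmat" where
  "cscale c A = (\<chi> i j. c * A $ i $ j)"

definition mpow :: "'n::finite cmat \<Rightarrow> nat \<Rightarrow> 'n cmat" where
  "mpow A k = ((\<lambda>B. A ** B) ^^ k) (mat 1)"

definition mexp :: "'n::finite cmat \<Rightarrow> 'n cmat" where
  "mexp A = (\<Sum>k. (1 / fact k) *\<^sub>R mpow A k)"

definition comm :: "'n::finite cmat \<Rightarrow> 'n cmat \<Rightarrow> 'n cmat" where
  "comm A B = A ** B - B ** A"

definition nested_comm :: "'n::finite cmat list \<Rightarrow> 'n cmat \<Rightarrow> 'n cmat" where
  "nested_comm Zs X = foldr comm Zs X"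

definition admissible :: "nat \<Rightarrow> 'n::finite cmat \<Rightarrow> 'n cmat \<Rightarrow> 'n cmat list \<Rightarrow> bool" where
  "admissible l H H0 Zs \<longleftrightarrow> length Zs = l - 1 \<and>
     (\<exists>j < length Zs. Zs ! j = comm H (- H0) \<and>
        (\<forall>k < length Zs. k \<noteq> j \<longrightarrow> Zs ! k = H \<or> Zs ! k = - H0))"

end

theory Submission
  imports Defs
begin

text \<open>
  Conjugation by \<open>exp (s Z)\<close> acts on matrices as the exponential of \<open>s ad Z\<close> in the Banach
  algebra of bounded operators on matrix space. With \<open>a = ad H\<close>, \<open>b = ad (-H0)\<close> and \<open>\<sigma>\<close> the
  multiplication by \<open>s = i t\<close>, which commutes with both, the difference in question is
  \<open>(exp (\<sigma> b) exp (\<sigma> a) - exp (\<sigma> (a + b))) X\<close>.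
  Multiplying out the exponential series gives \<open>exp y exp x = (\<Sum>n. F n / n!)\<close>, where \<open>F n\<close> is
  the binomial expansion of \<open>(x + y)^n\<close> with every \<open>y\<close> moved to the left; so the \<open>l\<close>-th
  coefficient is \<open>\<sigma>^l (F l - (a + b)^l) / l!\<close>. The recursions
  \<open>(a + b)^(n+1) - F (n+1) = (a + b) ((a + b)^n - F n) + [a, F n]\<close> and
  \<open>[a, F (n+1)] = [a, b] F n + b [a, F n] + [a, F n] a\<close> expand \<open>(a + b)^l - F l\<close> into at most
  \<open>l^2 2^l\<close> words in \<open>a\<close>, \<open>b\<close> containing exactly one letter \<open>[a, b] = ad [H, -H0]\<close>,
  and applied to \<open>X\<close> such a word is a nested commutator.
\<close>

section \<open>Bounded operators as a Banach algebra\<close>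

text \<open>HOL-Analysis provides the normed space \<open>'a \<Rightarrow>\<^sub>L 'a\<close> but no multiplication on it;
  on this copy composition is the product, which makes \<open>exp\<close> available.\<close>

typedef (overloaded) 'a endo = "UNIV :: ('a::real_normed_vector \<Rightarrow>\<^sub>L 'a) set"
  morphisms blinfun_of_endo endo_of_blinfun ..

setup_lifting type_definition_endo

instantiation endo :: (real_normed_vector) real_normed_vector
begin
lift_definition norm_endo :: "'a endo \<Rightarrow> real" is norm .
lift_definition minus_endo :: "'a endo \<Rightarrow> 'a endo \<Rightarrow> 'a endo" is "(-)" .
lift_definition plus_endo :: "'a endo \<Rightarrow> 'a endo \<Rightarrow> 'a endo" is "(+)" .
lift_definition uminus_endo :: "'a endo \<Rightarrow> 'a endo" is uminus .
lift_definition zero_endo :: "'a endo" is 0 .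
lift_definition scaleR_endo :: "real \<Rightarrow> 'a endo \<Rightarrow> 'a endo" is scaleR .
definition dist_endo :: "'a endo \<Rightarrow> 'a endo \<Rightarrow> real" where "dist_endo S T = norm (S - T)"
definition uniformity_endo :: "('a endo \<times> 'a endo) filter"
  where "uniformity_endo = (INF e\<in>{0 <..}. principal {(S, T). dist S T < e})"
definition open_endo :: "'a endo set \<Rightarrow> bool"
  where "open_endo U = (\<forall>S\<in>U. \<forall>\<^sub>F (S', T) in uniformity. S' = S \<longrightarrow> T \<in> U)"
definition sgn_endo :: "'a endo \<Rightarrow> 'a endo" where "sgn_endo S = inverse (norm S) *\<^sub>R S"
instance
  by standard
    (unfold dist_endo_def open_endo_def sgn_endo_def uniformity_endo_def,
     (rule refl | (transfer, force simp: norm_triangle_ineq algebra_simps))+)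
end

instantiation endo :: ("{real_normed_vector, perfect_space}") real_normed_algebra_1
begin
lift_definition times_endo :: "'a endo \<Rightarrow> 'a endo \<Rightarrow> 'a endo" is blinfun_compose .
lift_definition one_endo :: "'a endo" is id_blinfun .
instance
proof
  fix S T U :: "'a endo" and r :: real
  show "S * T * U = S * (T * U)"
    by transfer (auto intro!: blinfun_eqI)
  show "(S + T) * U = S * U + T * U" "S * (T + U) = S * T + S * U"
    by (transfer, auto intro!: blinfun_eqI simp: blinfun.bilinear_simps)+
  show "1 * S = S" "S * 1 = S"
    by (transfer, auto intro!: blinfun_eqI)+
  show "r *\<^sub>R S * T = r *\<^sub>R (S * T)" "S * r *\<^sub>R T = r *\<^sub>R (S * T)"
    by (transfer, auto intro!: blinfun_eqI simp: blinfun.bilinear_simps)+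
  show "norm (S * T) \<le> norm S * norm T"
    by transfer (rule norm_blinfun_compose)
  show norm_one: "norm (1 :: 'a endo) = 1"
    by transfer simp
  show "(0 :: 'a endo) \<noteq> 1"
    using norm_one by (metis norm_zero zero_neq_one)
qed
end

lemma tendsto_blinfun_of_endo:
  "(f \<longlongrightarrow> T) F \<longleftrightarrow> ((\<lambda>x. blinfun_of_endo (f x)) \<longlongrightarrow> blinfun_of_endo T) F"
  by (simp add: tendsto_iff dist_norm dist_endo_def norm_endo.rep_eq minus_endo.rep_eq)

instance endo :: (banach) banach
proof
  fix S :: "nat \<Rightarrow> 'a endo"
  assume "Cauchy S"
  then have "Cauchy (\<lambda>n. blinfun_of_endo (S n))"
    by (simp add: Cauchy_def dist_norm dist_endo_def norm_endo.rep_eq minus_endo.rep_eq)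
  then obtain L where "(\<lambda>n. blinfun_of_endo (S n)) \<longlonglongrightarrow> L"
    using Cauchy_convergent convergent_def by blast
  then have "S \<longlonglongrightarrow> endo_of_blinfun L"
    by (simp add: tendsto_blinfun_of_endo endo_of_blinfun_inverse)
  then show "convergent S"
    by (auto simp: convergent_def)
qed

lift_definition endo_apply :: "'a::real_normed_vector endo \<Rightarrow> 'a \<Rightarrow> 'a" is blinfun_apply .

lift_definition endo_of :: "('a::real_normed_vector \<Rightarrow> 'a) \<Rightarrow> 'a endo" is Blinfun .

lemma endo_eqI: "(\<And>x. endo_apply S x = endo_apply T x) \<Longrightarrow> S = T"
  by transfer (rule blinfun_eqI)

lemma endo_apply_endo_of: "bounded_linear f \<Longrightarrow> endo_apply (endo_of f) x = f x"
  by transfer (simp add: bounded_linear_Blinfun_apply)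

lemma endo_apply_times [simp]: "endo_apply (S * T) x = endo_apply S (endo_apply T x)"
  by transfer simp

lemma endo_apply_one [simp]: "endo_apply 1 x = x"
  by transfer simp

lemma endo_apply_add [simp]: "endo_apply (S + T) x = endo_apply S x + endo_apply T x"
  and endo_apply_diff [simp]: "endo_apply (S - T) x = endo_apply S x - endo_apply T x"
  and endo_apply_minus [simp]: "endo_apply (- T) x = - endo_apply T x"
  and endo_apply_zero [simp]: "endo_apply 0 x = 0"
  and endo_apply_scaleR [simp]: "endo_apply (r *\<^sub>R T) x = r *\<^sub>R endo_apply T x"
  by (transfer, simp add: blinfun.bilinear_simps)+

lemma bounded_linear_endo_apply_left: "bounded_linear (\<lambda>T. endo_apply T x)"
  by (rule bounded_linear_intro[where K = "norm x"]) (simp_all, transfer, rule norm_blinfun)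

lemma endo_apply_exp_sums:
  fixes T :: "'a::{banach, perfect_space} endo"
  shows "(\<lambda>n. endo_apply (T ^ n) x /\<^sub>R fact n) sums endo_apply (exp T) x"
  using bounded_linear.sums[OF bounded_linear_endo_apply_left exp_converges[of T]] by simp

definition endo_lmult :: "'a::real_normed_algebra \<Rightarrow> 'a endo" where
  "endo_lmult y = endo_of (\<lambda>z. y * z)"

definition endo_rmult :: "'a::real_normed_algebra \<Rightarrow> 'a endo" where
  "endo_rmult y = endo_of (\<lambda>z. z * y)"

lemma endo_apply_lmult [simp]: "endo_apply (endo_lmult y) z = y * z"
  by (simp add: endo_lmult_def endo_apply_endo_of bounded_linear_mult_right)

lemma endo_apply_rmult [simp]: "endo_apply (endo_rmult y) z = z * y"
  by (simp add: endo_rmult_def endo_apply_endo_of bounded_linear_mult_left)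

lemma endo_apply_exp_lmult:
  fixes y :: "'a::{real_normed_algebra_1, banach}"
  shows "endo_apply (exp (endo_lmult y)) z = exp y * z"
proof (rule sums_unique2[OF endo_apply_exp_sums])
  have "endo_apply (endo_lmult y ^ n) z = y ^ n * z" for n
    by (induction n) (simp_all add: mult.assoc)
  then show "(\<lambda>n. endo_apply (endo_lmult y ^ n) z /\<^sub>R fact n) sums (exp y * z)"
    using bounded_linear.sums[OF bounded_linear_mult_left exp_converges[of y], of z] by simp
qed

lemma endo_apply_exp_rmult:
  fixes y :: "'a::{real_normed_algebra_1, banach}"
  shows "endo_apply (exp (endo_rmult y)) z = z * exp y"
proof (rule sums_unique2[OF endo_apply_exp_sums])
  have "endo_apply (endo_rmult y ^ n) z = z * y ^ n" for n
    by (induction n) (simp_all add: mult.assoc power_commutes)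
  then show "(\<lambda>n. endo_apply (endo_rmult y ^ n) z /\<^sub>R fact n) sums (z * exp y)"
    using bounded_linear.sums[OF bounded_linear_mult_right exp_converges[of y], of z] by simp
qed

section \<open>Products of exponentials\<close>

text \<open>\<open>ordered_binomial x y n = (\<Sum>i\<le>n. (n choose i) y^i x^(n-i))\<close>, all \<open>y\<close> to the left.\<close>

fun ordered_binomial :: "'a::semiring_1 \<Rightarrow> 'a \<Rightarrow> nat \<Rightarrow> 'a" where
  "ordered_binomial x y 0 = 1"
| "ordered_binomial x y (Suc n) = y * ordered_binomial x y n + ordered_binomial x y n * x"

lemma exp_mult_exp_sums:
  fixes x y :: "'a::{real_normed_algebra_1, banach}"
  shows "(\<lambda>n. ordered_binomial x y n /\<^sub>R fact n) sums (exp y * exp x)"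
proof -
  let ?T = "endo_lmult y + endo_rmult x"
  have "ordered_binomial x y n = endo_apply (?T ^ n) 1" for n
    by (induction n) simp_all
  moreover have "endo_apply (exp ?T) 1 = exp y * exp x"
  proof -
    have "endo_lmult y * endo_rmult x = endo_rmult x * endo_lmult y"
      by (rule endo_eqI) (simp add: mult.assoc)
    then show ?thesis
      by (simp add: exp_add_commuting endo_apply_exp_lmult endo_apply_exp_rmult)
  qed
  ultimately show ?thesis
    using endo_apply_exp_sums[of ?T 1] by simp
qed

lemma ordered_binomial_commute:
  fixes s x y :: "'a::semiring_1"
  assumes "s * x = x * s" "s * y = y * s"
  shows "s * ordered_binomial x y n = ordered_binomial x y n * s"
proof (induction n)
  case (Suc n)
  have "s * (y * ordered_binomial x y n) = y * ordered_binomial x y n * s"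
    by (metis Suc assms(2) mult.assoc)
  moreover have "s * (ordered_binomial x y n * x) = ordered_binomial x y n * x * s"
    by (metis Suc assms(1) mult.assoc)
  ultimately show ?case
    by (simp add: distrib_left distrib_right)
qed simp

lemma power_mult_commuting:
  fixes s x :: "'a::monoid_mult"
  assumes "s * x = x * s"
  shows "(s * x) ^ n = s ^ n * x ^ n"
proof (induction n)
  case (Suc n)
  have commute: "x * s ^ n = s ^ n * x"
    by (metis assms power_commuting_commutes)
  have "(s * x) ^ Suc n = s * (x * s ^ n) * x ^ n"
    using Suc by (simp add: mult.assoc)
  also have "\<dots> = s ^ Suc n * x ^ Suc n"
    by (simp add: commute mult.assoc)
  finally show ?case .
qed simp

lemma ordered_binomial_mult_commuting:
  fixes s x y :: "'a::semiring_1"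
  assumes "s * x = x * s" "s * y = y * s"
  shows "ordered_binomial (s * x) (s * y) n = s ^ n * ordered_binomial x y n"
proof (induction n)
  case (Suc n)
  let ?F = "ordered_binomial x y n"
  have "y * s ^ n = s ^ n * y"
    by (metis assms(2) power_commuting_commutes)
  then have left: "s * y * (s ^ n * ?F) = s ^ Suc n * (y * ?F)"
    by (metis mult.assoc power_Suc)
  have "?F * s = s * ?F"
    using ordered_binomial_commute[OF assms] by simp
  then have right: "s ^ n * ?F * (s * x) = s ^ Suc n * (?F * x)"
    by (metis mult.assoc power_Suc2)
  show ?case
    using Suc by (simp add: left right distrib_left)
qed simp

lemma exp_mult_exp_minus_exp_sums:
  fixes s x y :: "'a::{real_normed_algebra_1, banach}"
  assumes "s * x = x * s" "s * y = y * s"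
  shows "(\<lambda>n. (s ^ n * (ordered_binomial x y n - (x + y) ^ n)) /\<^sub>R fact n)
           sums (exp (s * y) * exp (s * x) - exp (s * x + s * y))"
proof -
  have "s * (x + y) = (x + y) * s"
    using assms by (simp add: distrib_left distrib_right)
  then have "(s * x + s * y) ^ n = s ^ n * (x + y) ^ n" for n
    by (metis distrib_left power_mult_commuting)
  then have "s ^ n * (ordered_binomial x y n - (x + y) ^ n)
      = ordered_binomial (s * x) (s * y) n - (s * x + s * y) ^ n" for n
    by (simp add: ordered_binomial_mult_commuting[OF assms] right_diff_distrib)
  then show ?thesis
    using sums_diff[OF exp_mult_exp_sums exp_converges] by (simp add: scaleR_diff_right)
qed

section \<open>Words\<close>

fun ordered_words :: "'m \<Rightarrow> 'm \<Rightarrow> nat \<Rightarrow> 'm list list" where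
  "ordered_words a b 0 = [[]]"
| "ordered_words a b (Suc n) =
     map ((#) b) (ordered_words a b n) @ map (\<lambda>w. w @ [a]) (ordered_words a b n)"

fun comm_words :: "'m \<Rightarrow> 'm \<Rightarrow> 'm \<Rightarrow> nat \<Rightarrow> 'm list list" where
  "comm_words a b g 0 = []"
| "comm_words a b g (Suc n) = map ((#) g) (ordered_words a b n)
     @ map ((#) b) (comm_words a b g n) @ map (\<lambda>w. w @ [a]) (comm_words a b g n)"

fun defect_words :: "'m \<Rightarrow> 'm \<Rightarrow> 'm \<Rightarrow> nat \<Rightarrow> 'm list list" where
  "defect_words a b g 0 = []"
| "defect_words a b g (Suc n) = map ((#) a) (defect_words a b g n)
     @ map ((#) b) (defect_words a b g n) @ comm_words a b g n"

context
  fixes f :: "'m \<Rightarrow> 'r::ring_1" and a b g :: 'm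
  assumes f_g: "f g = f a * f b - f b * f a"
begin

lemma sum_prod_ordered_words:
  "(\<Sum>w\<leftarrow>ordered_words a b n. prod_list (map f w)) = ordered_binomial (f a) (f b) n"
  by (induction n) (simp_all add: o_def sum_list_const_mult sum_list_mult_const)

lemma sum_prod_comm_words:
  "(\<Sum>w\<leftarrow>comm_words a b g n. prod_list (map f w))
     = f a * ordered_binomial (f a) (f b) n - ordered_binomial (f a) (f b) n * f a"
proof (induction n)
  case (Suc n)
  let ?F = "ordered_binomial (f a) (f b) n"
    and ?S = "\<Sum>w\<leftarrow>comm_words a b g n. prod_list (map f w)"
  have "(\<Sum>w\<leftarrow>comm_words a b g (Suc n). prod_list (map f w)) = f g * ?F + f b * ?S + ?S * f a"
    by (simp add: o_def sum_list_const_mult sum_list_mult_const sum_prod_ordered_words)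
  then show ?case
    by (simp add: Suc f_g algebra_simps)
qed simp

lemma sum_prod_defect_words:
  "(\<Sum>w\<leftarrow>defect_words a b g n. prod_list (map f w))
     = (f a + f b) ^ n - ordered_binomial (f a) (f b) n"
proof (induction n)
  case (Suc n)
  let ?F = "ordered_binomial (f a) (f b) n"
    and ?D = "\<Sum>w\<leftarrow>defect_words a b g n. prod_list (map f w)"
  have "(\<Sum>w\<leftarrow>defect_words a b g (Suc n). prod_list (map f w))
      = (f a + f b) * ?D + (f a * ?F - ?F * f a)"
    by (simp add: o_def sum_list_const_mult sum_prod_comm_words distrib_right)
  then show ?case
    by (simp add: Suc algebra_simps)
qed simp

end

lemma length_ordered_words: "length (ordered_words a b n) = 2 ^ n"
  by (induction n) simp_all

lemma length_comm_words: "length (comm_words a b g n) \<le> n * 2 ^ n"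
  by (induction n) (simp_all add: length_ordered_words)

lemma length_defect_words: "length (defect_words a b g n) \<le> n\<^sup>2 * 2 ^ n"
proof (induction n)
  case (Suc n)
  then have "length (defect_words a b g (Suc n)) \<le> 2 * (n\<^sup>2 * 2 ^ n) + n * 2 ^ n"
    using length_comm_words[of a b g n] by simp
  also have "\<dots> \<le> (Suc n)\<^sup>2 * 2 ^ Suc n"
    by (simp add: power2_eq_square algebra_simps)
  finally show ?case .
qed simp

definition marked_word :: "'m set \<Rightarrow> 'm \<Rightarrow> 'm list \<Rightarrow> bool" where
  "marked_word A g w \<longleftrightarrow> (\<exists>u v. w = u @ g # v \<and> set u \<subseteq> A \<and> set v \<subseteq> A)"

lemma marked_word_Cons: "z \<in> A \<Longrightarrow> marked_word A g w \<Longrightarrow> marked_word A g (z # w)"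
  unfolding marked_word_def by (metis Cons_eq_appendI insert_subset list.set(2))

lemma marked_word_snoc: "z \<in> A \<Longrightarrow> marked_word A g w \<Longrightarrow> marked_word A g (w @ [z])"
  unfolding marked_word_def by fastforce

lemma marked_word_mark: "set w \<subseteq> A \<Longrightarrow> marked_word A g (g # w)"
  unfolding marked_word_def by fastforce

lemma marked_word_nth:
  assumes "marked_word A g w"
  shows "\<exists>j < length w. w ! j = g \<and> (\<forall>k < length w. k \<noteq> j \<longrightarrow> w ! k \<in> A)"
proof -
  obtain u v where w: "w = u @ g # v" "set u \<subseteq> A" "set v \<subseteq> A"
    using assms unfolding marked_word_def by blast
  then show ?thesis
    by (intro exI[of _ "length u"]) (auto simp: nth_append nth_Cons' dest!: nth_mem)
qed

lemma ordered_words_letters: "w \<in> set (ordered_words a b n) \<Longrightarrow> length w = n \<and> set w \<subseteq> {a, b}"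
  by (induction n arbitrary: w) force+

lemma comm_words_marked:
  "w \<in> set (comm_words a b g n) \<Longrightarrow> length w = n \<and> marked_word {a, b} g w"
  by (induction n arbitrary: w)
    (auto dest: ordered_words_letters intro: marked_word_Cons marked_word_snoc marked_word_mark)

lemma defect_words_marked:
  "w \<in> set (defect_words a b g n) \<Longrightarrow> Suc (length w) = n \<and> marked_word {a, b} g w"
  by (induction n arbitrary: w) (auto dest: comm_words_marked intro: marked_word_Cons)

section \<open>Conjugation of matrices\<close>

lemma bounded_bilinear_matrix_mult: "bounded_bilinear ((**) :: 'n::finite cmat \<Rightarrow> 'n cmat \<Rightarrow> 'n cmat)"
  unfolding bilinear_conv_bounded_bilinear[symmetric]
  by (auto simp: bilinear_def linear_iff matrix_matrix_mult_def vec_eq_iff sum.distrib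
      scaleR_sum_right algebra_simps)

interpretation matrix_mult: bounded_bilinear "(**) :: 'n::finite cmat \<Rightarrow> 'n cmat \<Rightarrow> 'n cmat"
  by (rule bounded_bilinear_matrix_mult)

lemma bounded_linear_cscale: "bounded_linear (cscale c :: 'n::finite cmat \<Rightarrow> 'n cmat)"
  unfolding linear_conv_bounded_linear[symmetric]
  by (auto simp: linear_iff cscale_def vec_eq_iff algebra_simps scaleR_conv_of_real)

lemma cscale_zero [simp]: "cscale c 0 = 0"
  by (simp add: cscale_def vec_eq_iff)

lemma cscale_diff [simp]: "cscale c (A - B) = cscale c A - cscale c B"
  by (simp add: cscale_def vec_eq_iff right_diff_distrib)

lemma cscale_minus [simp]: "cscale c (- A) = - cscale c A"
  by (simp add: cscale_def vec_eq_iff)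

lemma cscale_cscale [simp]: "cscale c (cscale d A) = cscale (c * d) A"
  by (simp add: cscale_def vec_eq_iff mult.assoc)

lemma cscale_one [simp]: "cscale 1 A = A"
  by (simp add: cscale_def vec_eq_iff)

lemma cscale_minus_left: "cscale (- c) A = - cscale c A"
  by (simp add: cscale_def vec_eq_iff)

lemma scaleR_eq_cscale: "r *\<^sub>R A = cscale (complex_of_real r) A"
  by (simp add: cscale_def vec_eq_iff) (simp add: scaleR_conv_of_real)

lemma matrix_mult_cscale_left [simp]: "cscale c A ** B = cscale c (A ** B)"
  by (simp add: matrix_matrix_mult_def cscale_def vec_eq_iff sum_distrib_left mult.assoc)

lemma matrix_mult_cscale_right [simp]: "A ** cscale c B = cscale c (A ** B)"
  by (simp add: matrix_matrix_mult_def cscale_def vec_eq_iff sum_distrib_left mult.left_commute)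

lemma mpow_0 [simp]: "mpow A 0 = mat 1"
  and mpow_Suc [simp]: "mpow A (Suc k) = A ** mpow A k"
  by (simp_all add: mpow_def)

definition mat_lmult :: "'n::finite cmat \<Rightarrow> 'n cmat endo" where
  "mat_lmult A = endo_of (\<lambda>Y. A ** Y)"

definition mat_rmult :: "'n::finite cmat \<Rightarrow> 'n cmat endo" where
  "mat_rmult A = endo_of (\<lambda>Y. Y ** A)"

definition ad :: "'n::finite cmat \<Rightarrow> 'n cmat endo" where
  "ad A = mat_lmult A - mat_rmult A"

definition cscale_endo :: "complex \<Rightarrow> 'n::finite cmat endo" where
  "cscale_endo c = endo_of (cscale c)"

lemma endo_apply_mat_lmult [simp]: "endo_apply (mat_lmult A) Y = A ** Y"
  by (simp add: mat_lmult_def endo_apply_endo_of matrix_mult.bounded_linear_right)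

lemma endo_apply_mat_rmult [simp]: "endo_apply (mat_rmult A) Y = Y ** A"
  by (simp add: mat_rmult_def endo_apply_endo_of matrix_mult.bounded_linear_left)

lemma endo_apply_ad [simp]: "endo_apply (ad A) Y = comm A Y"
  by (simp add: ad_def comm_def)

lemma endo_apply_cscale_endo [simp]: "endo_apply (cscale_endo c) Y = cscale c Y"
  by (simp add: cscale_endo_def endo_apply_endo_of bounded_linear_cscale)

lemma mexp_sums: "(\<lambda>k. mpow A k /\<^sub>R fact k) sums mexp A"
proof -
  have "endo_apply (mat_lmult A ^ k) Y = mpow A k ** Y" for k Y
    by (induction k) (simp_all add: matrix_mul_assoc)
  then have "(\<lambda>k. mpow A k /\<^sub>R fact k) sums endo_apply (exp (mat_lmult A)) (mat 1)"
    using endo_apply_exp_sums[of "mat_lmult A" "mat 1"] by simp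
  then show ?thesis
    unfolding mexp_def by (simp add: sums_iff divide_inverse_commute)
qed

lemma endo_apply_exp_mat_lmult: "endo_apply (exp (mat_lmult A)) Y = mexp A ** Y"
proof (rule sums_unique2[OF endo_apply_exp_sums])
  have "endo_apply (mat_lmult A ^ k) Y = mpow A k ** Y" for k
    by (induction k) (simp_all add: matrix_mul_assoc)
  then show "(\<lambda>k. endo_apply (mat_lmult A ^ k) Y /\<^sub>R fact k) sums (mexp A ** Y)"
    using bounded_linear.sums[OF matrix_mult.bounded_linear_left[of Y] mexp_sums[of A]]
    by (simp add: matrix_mult.scaleR_left)
qed

lemma endo_apply_exp_mat_rmult: "endo_apply (exp (mat_rmult A)) Y = Y ** mexp A"
proof (rule sums_unique2[OF endo_apply_exp_sums])
  have "endo_apply (mat_rmult A ^ k) Y = Y ** mpow A k" for k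
    by (induction k arbitrary: Y) (simp_all add: matrix_mul_assoc power_Suc2 del: power_Suc)
  then show "(\<lambda>k. endo_apply (mat_rmult A ^ k) Y /\<^sub>R fact k) sums (Y ** mexp A)"
    using bounded_linear.sums[OF matrix_mult.bounded_linear_right[of Y] mexp_sums[of A]]
    by (simp add: matrix_mult.scaleR_right)
qed

lemma ad_add: "ad (A + B) = ad A + ad B"
  by (rule endo_eqI) (simp add: comm_def matrix_mult.add_left matrix_mult.add_right)

lemma ad_comm: "ad (comm A B) = ad A * ad B - ad B * ad A"
  by (rule endo_eqI)
    (simp add: comm_def matrix_mult.diff_left matrix_mult.diff_right matrix_mul_assoc)

lemma cscale_endo_commute_ad: "cscale_endo c * ad A = ad A * cscale_endo c"
  by (rule endo_eqI) (simp add: comm_def)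

lemma endo_apply_cscale_endo_power: "endo_apply (cscale_endo c ^ k) Y = cscale (c ^ k) Y"
  by (induction k) simp_all

lemma endo_apply_prod_list_ad: "endo_apply (prod_list (map ad w)) Y = nested_comm w Y"
  by (induction w) (simp_all add: nested_comm_def)

lemma endo_apply_sum_prod_ad:
  "endo_apply (\<Sum>w\<leftarrow>ws. prod_list (map ad w)) Y = (\<Sum>w\<leftarrow>ws. nested_comm w Y)"
  by (induction ws) (simp_all add: nested_comm_def endo_apply_prod_list_ad)

lemma mexp_conjugation:
  "mexp (cscale s A) ** Y ** mexp (cscale (- s) A) = endo_apply (exp (cscale_endo s * ad A)) Y"
proof -
  have "cscale_endo s * ad A = mat_lmult (cscale s A) + mat_rmult (cscale (- s) A)"
    by (rule endo_eqI) (simp add: comm_def cscale_minus_left matrix_mult.minus_right)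
  moreover have "mat_lmult (cscale s A) * mat_rmult (cscale (- s) A)
      = mat_rmult (cscale (- s) A) * mat_lmult (cscale s A)"
    by (rule endo_eqI) (simp add: matrix_mul_assoc)
  ultimately show ?thesis
    by (simp add: exp_add_commuting endo_apply_exp_mat_lmult endo_apply_exp_mat_rmult
        matrix_mul_assoc)
qed

text \<open>The series coefficient is \<open>F l - (a + b)^l\<close>, the negative of what
  \<open>defect_words\<close> expands; hence the sign.\<close>

definition commutator_terms :: "'n::finite cmat \<Rightarrow> 'n cmat \<Rightarrow> nat \<Rightarrow> (complex \<times> 'n cmat list) list"
  where "commutator_terms H H0 l = map (Pair (- 1)) (defect_words H (- H0) (comm H (- H0)) l)"

lemma length_commutator_terms: "length (commutator_terms H H0 l) \<le> 2 ^ l * l\<^sup>2"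
  using length_defect_words[of H "- H0" "comm H (- H0)" l]
  by (simp add: commutator_terms_def mult.commute)

lemma commutator_terms_admissible:
  assumes "(c, Zs) \<in> set (commutator_terms H H0 l)"
  shows "c = - 1 \<and> admissible l H H0 Zs"
proof -
  have "c = - 1" "Suc (length Zs) = l" "marked_word {H, - H0} (comm H (- H0)) Zs"
    using assms by (auto simp: commutator_terms_def dest: defect_words_marked)
  then show ?thesis
    unfolding admissible_def using marked_word_nth by fastforce
qed

lemma sum_list_negf: "(\<Sum>x\<leftarrow>xs. - f x) = - (\<Sum>x\<leftarrow>xs. f x :: 'a::ab_group_add)"
  by (induction xs) simp_all

lemma commutator_terms_coefficient:
  fixes X H H0 :: "'n::finite cmat"
  defines "a \<equiv> ad H" and "b \<equiv> ad (- H0)"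
  shows "endo_apply ((cscale_endo s ^ l * (ordered_binomial a b l - (a + b) ^ l)) /\<^sub>R fact l) X
    = cscale (s ^ l / of_nat (fact l))
        (\<Sum>(c, Zs) \<leftarrow> commutator_terms H H0 l. cscale c (nested_comm Zs X))"
proof -
  let ?W = "defect_words H (- H0) (comm H (- H0)) l"
  have "(\<Sum>w\<leftarrow>?W. prod_list (map ad w)) = (a + b) ^ l - ordered_binomial a b l"
    unfolding a_def b_def by (rule sum_prod_defect_words) (rule ad_comm)
  then have "endo_apply (ordered_binomial a b l - (a + b) ^ l) X = - (\<Sum>w\<leftarrow>?W. nested_comm w X)"
    by (metis endo_apply_minus endo_apply_sum_prod_ad minus_diff_eq)
  also have "\<dots> = (\<Sum>(c, Zs) \<leftarrow> commutator_terms H H0 l. cscale c (nested_comm Zs X))"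
    by (simp add: commutator_terms_def o_def cscale_minus_left sum_list_negf)
  finally have "endo_apply ((cscale_endo s ^ l * (ordered_binomial a b l - (a + b) ^ l)) /\<^sub>R fact l) X
      = inverse (fact l) *\<^sub>R cscale (s ^ l)
          (\<Sum>(c, Zs) \<leftarrow> commutator_terms H H0 l. cscale c (nested_comm Zs X))"
    by (simp only: endo_apply_scaleR endo_apply_times endo_apply_cscale_endo_power)
  also have "\<dots> = cscale (s ^ l / of_nat (fact l))
      (\<Sum>(c, Zs) \<leftarrow> commutator_terms H H0 l. cscale c (nested_comm Zs X))"
    by (simp add: scaleR_eq_cscale divide_inverse mult.commute)
  finally show ?thesis .
qed

lemma commutator_terms_sums:
  fixes X H H0 :: "'n::finite cmat"
  shows "(\<lambda>l. cscale (s ^ l / of_nat (fact l))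
            (\<Sum>(c, Zs) \<leftarrow> commutator_terms H H0 l. cscale c (nested_comm Zs X)))
         sums (mexp (cscale (- s) H0) ** mexp (cscale s H) ** X
                 ** mexp (cscale (- s) H) ** mexp (cscale s H0)
               - mexp (cscale s (H - H0)) ** X ** mexp (cscale (- s) (H - H0)))"
proof -
  define a b \<sigma> :: "'n cmat endo" where "a = ad H" and "b = ad (- H0)" and "\<sigma> = cscale_endo s"
  have "mexp (cscale (- s) H0) ** mexp (cscale s H) ** X ** mexp (cscale (- s) H) ** mexp (cscale s H0)
      = mexp (cscale s (- H0)) ** (mexp (cscale s H) ** X ** mexp (cscale (- s) H))
          ** mexp (cscale (- s) (- H0))"
    by (simp add: cscale_minus_left matrix_mul_assoc)
  also have "\<dots> = endo_apply (exp (\<sigma> * b) * exp (\<sigma> * a)) X"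
    unfolding mexp_conjugation a_def b_def \<sigma>_def by simp
  moreover have "mexp (cscale s (H - H0)) ** X ** mexp (cscale (- s) (H - H0))
      = endo_apply (exp (\<sigma> * a + \<sigma> * b)) X"
    unfolding mexp_conjugation a_def b_def \<sigma>_def
    by (simp add: ad_add[of H "- H0", simplified] distrib_left)
  moreover have "\<sigma> * a = a * \<sigma>" "\<sigma> * b = b * \<sigma>"
    unfolding a_def b_def \<sigma>_def by (simp_all add: cscale_endo_commute_ad)
  note bounded_linear.sums[OF bounded_linear_endo_apply_left exp_mult_exp_minus_exp_sums[OF this]]
  ultimately show ?thesis
    unfolding a_def b_def \<sigma>_def commutator_terms_coefficient endo_apply_diff by simp
qed

theorem lemma3p13:
  fixes X H H0 :: "complex ^ 'n::finite ^ 'n"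
  assumes "hermitian X" and "hermitian H" and "hermitian H0"
  shows "\<exists>C :: nat \<Rightarrow> complex ^ 'n ^ 'n.
           (\<forall>l\<ge>2. \<exists>terms :: (complex \<times> (complex ^ 'n ^ 'n) list) list.
               length terms \<le> 2 ^ l * l\<^sup>2 \<and>
               (\<forall>(s, Zs) \<in> set terms. (s = 1 \<or> s = -1) \<and> admissible l H H0 Zs) \<and>
               C l = (\<Sum>(s, Zs) \<leftarrow> terms. cscale s (nested_comm Zs X))) \<and>
           (\<forall>t::real.
               (\<lambda>m. cscale ((\<i> * of_real t) ^ (m + 2) / of_nat (fact (m + 2))) (C (m + 2)))
               sums
               (mexp (cscale (- \<i> * of_real t) H0) ** mexp (cscale (\<i> * of_real t) H) ** X
                  ** mexp (cscale (- \<i> * of_real t) H) ** mexp (cscale (\<i> * of_real t) H0)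
                - mexp (cscale (\<i> * of_real t) (H - H0)) ** X ** mexp (cscale (- \<i> * of_real t) (H - H0))))"
proof -
  define C where "C l = (\<Sum>(s, Zs) \<leftarrow> commutator_terms H H0 l. cscale s (nested_comm Zs X))" for l
  have C_0_1: "C 0 = 0" "C 1 = 0"
    by (simp_all add: C_def commutator_terms_def)
  have "\<exists>terms :: (complex \<times> (complex ^ 'n ^ 'n) list) list.
          length terms \<le> 2 ^ l * l\<^sup>2 \<and>
          (\<forall>(s, Zs) \<in> set terms. (s = 1 \<or> s = -1) \<and> admissible l H H0 Zs) \<and>
          C l = (\<Sum>(s, Zs) \<leftarrow> terms. cscale s (nested_comm Zs X))" for l
    by (intro exI[of _ "commutator_terms H H0 l"])
      (auto simp: C_def length_commutator_terms dest: commutator_terms_admissible)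
  moreover have "(\<lambda>m. cscale ((\<i> * of_real t) ^ (m + 2) / of_nat (fact (m + 2))) (C (m + 2)))
      sums (mexp (cscale (- \<i> * of_real t) H0) ** mexp (cscale (\<i> * of_real t) H) ** X
              ** mexp (cscale (- \<i> * of_real t) H) ** mexp (cscale (\<i> * of_real t) H0)
            - mexp (cscale (\<i> * of_real t) (H - H0)) ** X
              ** mexp (cscale (- \<i> * of_real t) (H - H0)))" for t :: real
    using commutator_terms_sums[of "\<i> * of_real t" X H H0, folded C_def] C_0_1
    by (subst sums_zero_iff_shift) (auto simp: less_2_cases_iff)
  ultimately show ?thesis
    by blast
qed

end
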